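(* In the setting of the context, assume (G2') and (HJ'), and let $\tilde\rho$ be a metric on $X$ inducing its topology, with constants $\gamma\ge1$, $C\ge1$ such that $C^{-1}\tilde\rho(x,y)^{-\gamma}\le\tilde G(x,y)\le C\tilde\rho(x,y)^{-\gamma}$ for all $x,y$. Then there exist $\tilde\alpha\in(0,1)$ and $\tilde c_J\ge1$ such that for all $x\in X_0$, $0<r<\tilde\alpha\tilde R_0(x)$ and $y\in\tilde U(x,\tilde\alpha^2r)$, $$\tilde\mu_x^{\tilde U(x,\tilde\alpha r)}(E)\le\tilde c_J\,\tilde\mu_y^{\tilde U(x,r)}(E)\qquad\text{for every Borel }E\subseteq X\setminus\tilde U(x,r).$$
   Context: $(X,\rho)$ separable metric space, $X_0\subsetneq X$ open. For every open $U\subseteq X$ and $x\in X$ a finite Borel measure $\mu_x^U$ is given such that for all open $U,V$ and $x$: $\mu_x^U(U)=0$, $\mu_x^U(X)\le1$, $\mu_x^U=\varepsilon_x$ (Dirac) if $x\notin U$; $y\mapsto\mu_y^U(E)$ universally measurable for Borel $E$; $\mu_x^U=\int\mu_y^U\,d\mu_x^V(y)$ if $V\subseteq U$. $\tilde\mu_x^U:=\frac{w}{w(x)}\mu_x^U$ (measure with density $w/w(x)$ w.r.t. $\mu_x^U$). $G\colon X\times X\to(0,\infty]$ Borel; $V(x,s):=\{y:G(y,x)^{-1}<s\}$, $\overset\circ V(x,s)$ its interior, $S_0(x):=\sup\{s>0:\overline{V(x,s)}\subseteq X_0\}$ for $x\in X_0$. $\tilde U(x,r):=\{y:\tilde\rho(x,y)<r\}$,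 $\tilde R_0(x):=\sup\{r>0:\overline{\tilde U(x,r)}\subseteq X_0\}$. (G2'): for every $x$, $G(x,x)=\lim_{y\to x}G(y,x)=\infty$; there is a Borel $w$ with $0<w\le1$ and $\int w\,d\mu_x^U\le w(x)$ for all open $U$, $x$; there is $\tilde c>1$ with $\tilde G(x,z)\wedge\tilde G(y,z)\le\tilde c\tilde G(x,y)$ for all $x,y,z$, where $\tilde G(x,y):=G(x,y)/(w(x)w(y))$; $\lambda:=\inf w(X_0)>0$; for each $x$ and neighborhood $V$ of $x$, $G(\cdot,x)/w$ is bounded on $X\setminus V$. (HJ'): there exist $\alpha\in(0,1)$, $c_J\ge1$ such that for all $x\in X_0$, $0<s<S_0(x)$ and $y\in\overset\circ V(x,\alpha^2s)$, $\mu_x^{\overset\circ V(x,\alpha s)}(E)\le c_J\mu_y^{\overset\circ V(x,s)}(E)$ for every Borel $E\subseteq X\setminus\overset\circ V(x,s)$. *)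

theory Defs
  imports "HOL-Analysis.Analysis" "HOL-Probability.Probability"
begin

definition univ_measurable :: "('a::topological_space \<Rightarrow> ennreal) \<Rightarrow> bool" where
  "univ_measurable f \<longleftrightarrow>
     (\<forall>\<nu>::'a measure. sets \<nu> = sets borel \<longrightarrow> finite_measure \<nu> \<longrightarrow>
        f \<in> borel_measurable (completion \<nu>))"

definition wmeas :: "('a set \<Rightarrow> 'a \<Rightarrow> 'a measure) \<Rightarrow> ('a \<Rightarrow> real) \<Rightarrow> 'a set \<Rightarrow> 'a \<Rightarrow> 'a measure" where
  "wmeas \<mu> w U x = density (\<mu> U x) (\<lambda>y. ennreal (w y / w x))"

definition Gt :: "('a \<Rightarrow> 'a \<Rightarrow> ennreal) \<Rightarrow> ('a \<Rightarrow> real) \<Rightarrow> 'a \<Rightarrow> 'a \<Rightarrow> ennreal" where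
  "Gt G w x y = G x y / ennreal (w x * w y)"

definition Vset :: "('a \<Rightarrow> 'a \<Rightarrow> ennreal) \<Rightarrow> 'a \<Rightarrow> real \<Rightarrow> 'a set" where
  "Vset G x s = {y. inverse (G y x) < ennreal s}"

text \<open>S_0(x) = sup {s>0. closure V(x,s) \<subseteq> X_0} (as an extended real; sup of the
  empty set is -\<infinity>, so that no s with 0 < s < S_0(x) exists in that case).\<close>
definition S0 :: "('a::topological_space \<Rightarrow> 'a \<Rightarrow> ennreal) \<Rightarrow> 'a set \<Rightarrow> 'a \<Rightarrow> ereal" where
  "S0 G X0 x = Sup (ereal ` {s. 0 < s \<and> closure (Vset G x s) \<subseteq> X0})"

definition Ut :: "('a \<Rightarrow> 'a \<Rightarrow> real) \<Rightarrow> 'a \<Rightarrow> real \<Rightarrow> 'a set" where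
  "Ut \<rho>t x r = {y. \<rho>t x y < r}"

definition R0t :: "('a::topological_space \<Rightarrow> 'a \<Rightarrow> real) \<Rightarrow> 'a set \<Rightarrow> 'a \<Rightarrow> ereal" where
  "R0t \<rho>t X0 x = Sup (ereal ` {r. 0 < r \<and> closure (Ut \<rho>t x r) \<subseteq> X0})"

end

theory Submission
  imports Defs
begin

text \<open>Under the two-sided comparison of \<open>\<tilde>G\<close> with \<open>\<tilde>\<rho>\<^sup>-\<^sup>\<gamma>\<close>, and since \<open>\<lambda> \<le> w \<le> 1\<close> on
  \<open>X\<^sub>0\<close>, the level sets \<open>V(x,s)\<close> of the Green function are sandwiched between \<open>\<tilde>\<rho>\<close>-balls
  whose radii are comparable to \<open>s\<^sup>1\<^sup>/\<^sup>\<gamma>\<close>. Choosing \<open>\<tilde>\<alpha>\<^sup>\<gamma> = \<alpha>\<lambda>\<^sup>2/C\<^sup>2\<close>, the balls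
  \<open>\<tilde>U(x,\<tilde>\<alpha>r) \<subseteq> V(x,\<alpha>s)\<close>, \<open>\<tilde>U(x,\<tilde>\<alpha>\<^sup>2r) \<subseteq> V(x,\<alpha>\<^sup>2s)\<close> and \<open>V(x,s) \<subseteq> \<tilde>U(x,r)\<close> fit
  into (HJ'). Enlarging the open set can only increase the harmonic measure of sets outside
  the larger one (balayage against Dirac masses), which transports (HJ') to the balls; the
  densities \<open>w/w(x)\<close> and \<open>w/w(y)\<close> differ by at most the factor \<open>1/\<lambda>\<close>.\<close>

lemma nn_integral_indicator_le_scaled:
  fixes M N :: "'a::topological_space measure"
  assumes sM: "sets M = sets borel" and sN: "sets N = sets borel" and E: "E \<in> sets borel"
    and le: "\<And>F. F \<in> sets borel \<Longrightarrow> F \<subseteq> E \<Longrightarrow> emeasure M F \<le> c * emeasure N F"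
    and g: "g \<in> borel_measurable borel"
  shows "(\<integral>\<^sup>+ z. g z * indicator E z \<partial>M) \<le> c * (\<integral>\<^sup>+ z. g z * indicator E z \<partial>N)"
proof -
  define M' where "M' = density M (indicator E)"
  define N' where "N' = scale_measure c (density N (indicator E))"
  have sM': "sets M' = sets borel" and sN': "sets N' = sets borel"
    using sM sN by (auto simp: M'_def N'_def)
  have Em: "E \<in> sets M" "E \<in> sets N" using E sM sN by auto
  have gM: "g \<in> borel_measurable M" "g \<in> borel_measurable N"
    using g sM sN by (auto simp: measurable_def dest: sets_eq_imp_space_eq)
  have "emeasure M' F \<le> emeasure N' F" for F
  proof (cases "F \<in> sets borel")
    case True
    have "emeasure M' F = emeasure M (E \<inter> F)"
      unfolding M'_def using True sM Em by (intro emeasure_restricted) auto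
    also have "\<dots> \<le> c * emeasure N (E \<inter> F)" using True E by (intro le) auto
    also have "\<dots> = emeasure N' F"
      unfolding N'_def using True sN Em by (simp add: emeasure_restricted)
    finally show ?thesis .
  next
    case False
    then show ?thesis using sM' by (simp add: emeasure_notin_sets)
  qed
  then have "M' \<le> N'" using sM' sN'
    by (auto simp: le_measure_iff le_fun_def dest: sets_eq_imp_space_eq)
  then have "nn_integral M' g \<le> nn_integral N' g"
    using sM' sN' by (intro nn_integral_mono_measure) auto
  also have "nn_integral M' g = (\<integral>\<^sup>+ z. indicator E z * g z \<partial>M)"
    unfolding M'_def using gM Em by (simp add: nn_integral_density)
  also have "nn_integral N' g = c * (\<integral>\<^sup>+ z. indicator E z * g z \<partial>N)"
    unfolding N'_def using gM Em by (simp add: nn_integral_scale_measure nn_integral_density)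
  finally show ?thesis by (simp add: mult.commute)
qed

lemma emeasure_weighted_density_le:
  fixes M N :: "'a::topological_space measure"
  assumes sM: "sets M = sets borel" and sN: "sets N = sets borel" and E: "E \<in> sets borel"
    and le: "\<And>F. F \<in> sets borel \<Longrightarrow> F \<subseteq> E \<Longrightarrow> emeasure M F \<le> ennreal c * emeasure N F"
    and w_meas: "w \<in> borel_measurable borel" and w_pos: "\<And>z. 0 < w z"
    and lam: "0 < lam" and wxy: "lam * w y \<le> w x" and c: "0 \<le> c"
  shows "emeasure (density M (\<lambda>z. ennreal (w z / w x))) E
           \<le> ennreal (c / lam) * emeasure (density N (\<lambda>z. ennreal (w z / w y))) E"
proof -
  have f_meas: "(\<lambda>z. ennreal (w z / d)) \<in> borel_measurable borel" for d
    using w_meas by measurable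
  have f_meas': "(\<lambda>z. ennreal (w z / d)) \<in> borel_measurable K" if "sets K = sets borel" for d K
    using f_meas measurable_cong_sets[OF that refl] by blast
  have weight_ratio: "ennreal (w z / w x) \<le> ennreal (1 / lam) * ennreal (w z / w y)" for z
  proof -
    have "w z / w x \<le> w z / (lam * w y)"
      using w_pos[of x] w_pos[of y] w_pos[of z] lam wxy
      by (intro divide_left_mono) auto
    then show ?thesis
      using lam w_pos[of y] w_pos[of z] by (simp add: ennreal_mult[symmetric] ennreal_leI)
  qed
  have "emeasure (density M (\<lambda>z. ennreal (w z / w x))) E
        = (\<integral>\<^sup>+ z. ennreal (w z / w x) * indicator E z \<partial>M)"
    using E sM by (intro emeasure_density f_meas') auto
  also have "\<dots> \<le> (\<integral>\<^sup>+ z. ennreal (1 / lam) * (ennreal (w z / w y) * indicator E z) \<partial>M)"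
    by (intro nn_integral_mono) (metis weight_ratio mult.assoc mult_right_mono zero_le)
  also have "\<dots> = ennreal (1 / lam) * (\<integral>\<^sup>+ z. ennreal (w z / w y) * indicator E z \<partial>M)"
    using E sM f_meas'[OF sM] by (intro nn_integral_cmult) auto
  also have "\<dots> \<le> ennreal (1 / lam) * (ennreal c * (\<integral>\<^sup>+ z. ennreal (w z / w y) * indicator E z \<partial>N))"
    by (intro mult_left_mono nn_integral_indicator_le_scaled[OF sM sN E le f_meas]) auto
  also have "(\<integral>\<^sup>+ z. ennreal (w z / w y) * indicator E z \<partial>N)
             = emeasure (density N (\<lambda>z. ennreal (w z / w y))) E"
    using E sN by (intro emeasure_density[symmetric] f_meas') auto
  also have "ennreal (1 / lam) * (ennreal c * \<dots>) = ennreal (c / lam) * \<dots>"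
    using lam c by (simp add: ennreal_mult[symmetric] mult.assoc[symmetric])
  finally show ?thesis .
qed

lemma emeasure_le_nn_integral_Dirac_outside:
  assumes sM: "sets M = sets borel" and F: "F \<in> sets borel"
    and dirac: "\<And>u. u \<in> F \<Longrightarrow> \<nu> u = return borel u"
  shows "emeasure M F \<le> (\<integral>\<^sup>+ u. emeasure (\<nu> u) F \<partial>completion M)"
proof -
  have FM: "F \<in> sets M" using F sM by simp
  then have "emeasure M F = (\<integral>\<^sup>+ u. indicator F u \<partial>completion M)"
    by (simp add: sets_completionI_sets)
  also have "\<dots> \<le> (\<integral>\<^sup>+ u. emeasure (\<nu> u) F \<partial>completion M)"
    using F dirac by (intro nn_integral_mono) (simp split: split_indicator)
  finally show ?thesis .
qed

lemma inverse_less_ennreal_iff: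
  assumes "0 < s"
  shows "inverse (g::ennreal) < ennreal s \<longleftrightarrow> ennreal (1 / s) < g"
proof (cases g rule: ennreal_cases)
  case (real r)
  show ?thesis
  proof (cases "r = 0")
    case False
    then have "inverse g = ennreal (1 / r)" using real by (simp add: inverse_ennreal inverse_eq_divide)
    then show ?thesis
      using real False assms by (simp add: ennreal_less_iff field_simps)
  qed (use real assms in simp)
qed (use assms in simp)

lemma Vset_mono: "t \<le> t' \<Longrightarrow> Vset G x t \<subseteq> Vset G x t'"
  unfolding Vset_def using ennreal_leI order_less_le_trans by blast

lemma Ut_mono: "r \<le> r' \<Longrightarrow> Ut \<rho> x r \<subseteq> Ut \<rho> x r'"
  by (auto simp: Ut_def)

lemma G_eq_Gt_mult:
  assumes "0 < w x" "0 < w y"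
  shows "G x y = Gt G w x y * ennreal (w x * w y)"
  using assms unfolding Gt_def by (simp add: ennreal_divide_times)

lemma less_S0I:
  assumes "0 < s" "s < s'" "closure (Vset G x s') \<subseteq> X0"
  shows "ereal s < S0 G X0 x"
  unfolding S0_def less_Sup_iff using assms by (intro bexI[of _ "ereal s'"]) auto

lemma less_R0tD:
  assumes "ereal r < R0t \<rho> X0 x"
  obtains r' where "r < r'" "closure (Ut \<rho> x r') \<subseteq> X0"
  using assms unfolding R0t_def less_Sup_iff by force

locale tilde_metric =
  fixes \<rho> :: "'a::topological_space \<Rightarrow> 'a \<Rightarrow> real"
  assumes eq0: "\<And>x y. \<rho> x y = 0 \<longleftrightarrow> x = y"
    and sym: "\<And>x y. \<rho> x y = \<rho> y x"
    and triangle: "\<And>x y z. \<rho> x z \<le> \<rho> x y + \<rho> y z"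
    and open_iff: "\<And>S. open S \<longleftrightarrow> (\<forall>x\<in>S. \<exists>r>0. Ut \<rho> x r \<subseteq> S)"
begin

lemma nonneg: "0 \<le> \<rho> x y"
  using triangle[where x = x and y = y and z = x] eq0[of x x] sym[of y x] by simp

lemma open_Ut: "open (Ut \<rho> x r)"
  unfolding open_iff
proof
  fix z assume "z \<in> Ut \<rho> x r"
  then have "0 < r - \<rho> x z" by (simp add: Ut_def)
  moreover have "Ut \<rho> z (r - \<rho> x z) \<subseteq> Ut \<rho> x r"
    by (clarsimp simp: Ut_def) (smt (verit) triangle)
  ultimately show "\<exists>e>0. Ut \<rho> z e \<subseteq> Ut \<rho> x r" by blast
qed

lemma centre_in_Ut: "0 < r \<Longrightarrow> x \<in> Ut \<rho> x r"
  using eq0[of x x] by (simp add: Ut_def)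

end

locale Green_comparable = tilde_metric \<rho> for \<rho> :: "'a::topological_space \<Rightarrow> 'a \<Rightarrow> real" +
  fixes G :: "'a \<Rightarrow> 'a \<Rightarrow> ennreal" and w :: "'a \<Rightarrow> real" and C \<gamma> :: real
  assumes w_pos: "\<And>x. 0 < w x" and w_le1: "\<And>x. w x \<le> 1"
    and G_diag: "\<And>x. G x x = \<infinity>"
    and C_pos: "0 < C" and gamma_pos: "0 < \<gamma>"
    and Gt_lower: "\<And>x y. x \<noteq> y \<Longrightarrow> ennreal (\<rho> x y powr (-\<gamma>) / C) \<le> Gt G w x y"
    and Gt_upper: "\<And>x y. x \<noteq> y \<Longrightarrow> Gt G w x y \<le> ennreal (C * \<rho> x y powr (-\<gamma>))"
begin

lemma Vset_subset_Ut:
  assumes R: "0 < R"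
  shows "Vset G x (R powr \<gamma> / C) \<subseteq> Ut \<rho> x R"
proof
  fix z assume zV: "z \<in> Vset G x (R powr \<gamma> / C)"
  show "z \<in> Ut \<rho> x R"
  proof (rule ccontr)
    assume "z \<notin> Ut \<rho> x R"
    then have d: "R \<le> \<rho> z x" by (simp add: Ut_def sym)
    then have zx: "z \<noteq> x" using R eq0 by force
    have "G z x \<le> ennreal (C * \<rho> z x powr (-\<gamma>)) * ennreal (w z * w x)"
      using G_eq_Gt_mult[of w z x G] Gt_upper[OF zx] w_pos[of z] w_pos[of x]
      by (simp add: mult_right_mono)
    also have "\<dots> = ennreal (C * \<rho> z x powr (-\<gamma>) * (w z * w x))"
      using C_pos w_pos[of z] w_pos[of x] by (simp add: ennreal_mult)
    also have "\<dots> \<le> ennreal (1 / (R powr \<gamma> / C))"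
    proof (rule ennreal_leI)
      have "C * \<rho> z x powr (-\<gamma>) * (w z * w x) \<le> C * R powr (-\<gamma>) * 1"
        using C_pos R d gamma_pos w_pos[of z] w_pos[of x] w_le1[of z] w_le1[of x]
        by (intro mult_mono mult_left_mono powr_mono2' mult_le_one) auto
      then show "C * \<rho> z x powr (-\<gamma>) * (w z * w x) \<le> 1 / (R powr \<gamma> / C)"
        by (simp add: powr_minus divide_inverse mult.commute)
    qed
    finally show False
      using zV R C_pos by (simp add: Vset_def inverse_less_ennreal_iff leD)
  qed
qed

lemma Ut_subset_Vset:
  assumes R: "0 < R" and lam: "0 < lam" and w_ge: "\<And>z. z \<in> Ut \<rho> x R \<Longrightarrow> lam \<le> w z"
  shows "Ut \<rho> x R \<subseteq> Vset G x (C * R powr \<gamma> / lam\<^sup>2)"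
proof
  fix z assume zU: "z \<in> Ut \<rho> x R"
  define t where "t = C * R powr \<gamma> / lam\<^sup>2"
  have t: "0 < t" using C_pos R lam by (simp add: t_def)
  show "z \<in> Vset G x (C * R powr \<gamma> / lam\<^sup>2)"
  proof (cases "z = x")
    case False
    have d: "0 < \<rho> z x" "\<rho> z x < R"
      using zU False eq0 nonneg sym by (auto simp: Ut_def order_le_neq_trans)
    have ww: "lam\<^sup>2 \<le> w z * w x"
      using w_ge[OF zU] w_ge[OF centre_in_Ut[OF R]] lam unfolding power2_eq_square
      by (intro mult_mono) auto
    have "1 / t = lam\<^sup>2 * R powr (-\<gamma>) / C"
      using C_pos R lam by (simp add: t_def powr_minus field_simps)
    also have "\<dots> < (w z * w x) * \<rho> z x powr (-\<gamma>) / C"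
      using ww d lam C_pos gamma_pos
      by (intro divide_strict_right_mono mult_le_less_imp_less powr_less_mono2_neg) auto
    finally have "ennreal (1 / t) < ennreal (\<rho> z x powr (-\<gamma>) / C) * ennreal (w z * w x)"
      using t C_pos w_pos[of z] w_pos[of x]
      by (simp add: ennreal_mult[symmetric] ennreal_less_iff mult.commute)
    also have "\<dots> \<le> G z x"
      using G_eq_Gt_mult[of w z x G] Gt_lower[OF False] w_pos[of z] w_pos[of x]
      by (simp add: mult_right_mono)
    finally show ?thesis using t by (simp add: Vset_def inverse_less_ennreal_iff t_def)
  qed (use t in \<open>simp add: Vset_def G_diag t_def\<close>)
qed

end

locale HJ_setting = Green_comparable \<rho> G w C \<gamma>
  for \<rho> :: "'a::topological_space \<Rightarrow> 'a \<Rightarrow> real" and G w C \<gamma> +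
  fixes \<mu> :: "'a set \<Rightarrow> 'a \<Rightarrow> 'a measure" and X0 :: "'a set" and \<alpha> cJ lam :: real
  assumes mu_sets: "\<And>U x. open U \<Longrightarrow> sets (\<mu> U x) = sets borel"
    and mu_dirac: "\<And>U x. open U \<Longrightarrow> x \<notin> U \<Longrightarrow> \<mu> U x = return borel x"
    and mu_balayage: "\<And>U V x E. open U \<Longrightarrow> open V \<Longrightarrow> V \<subseteq> U \<Longrightarrow> E \<in> sets borel \<Longrightarrow>
         emeasure (\<mu> U x) E = (\<integral>\<^sup>+ y. emeasure (\<mu> U y) E \<partial>completion (\<mu> V x))"
    and w_meas: "w \<in> borel_measurable borel"
    and C_ge1: "1 \<le> C"
    and alpha: "0 < \<alpha>" "\<alpha> < 1" and cJ: "1 \<le> cJ"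
    and lam: "0 < lam" "lam \<le> 1" and lam_le_w: "\<And>x. x \<in> X0 \<Longrightarrow> lam \<le> w x"
    and HJ: "\<And>x s y E. x \<in> X0 \<Longrightarrow> 0 < s \<Longrightarrow> ereal s < S0 G X0 x \<Longrightarrow>
               y \<in> interior (Vset G x (\<alpha>\<^sup>2 * s)) \<Longrightarrow> E \<in> sets borel \<Longrightarrow>
               E \<subseteq> - interior (Vset G x s) \<Longrightarrow>
               emeasure (\<mu> (interior (Vset G x (\<alpha> * s))) x) E
                 \<le> ennreal cJ * emeasure (\<mu> (interior (Vset G x s)) y) E"
begin

lemma mu_mono_outside:
  assumes "open U" "open V" "U \<subseteq> V" "F \<in> sets borel" "F \<subseteq> - V"
  shows "emeasure (\<mu> U x) F \<le> emeasure (\<mu> V x) F"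
proof -
  have "emeasure (\<mu> U x) F \<le> (\<integral>\<^sup>+ u. emeasure (\<mu> V u) F \<partial>completion (\<mu> U x))"
    using assms by (intro emeasure_le_nn_integral_Dirac_outside mu_sets mu_dirac) auto
  also have "\<dots> = emeasure (\<mu> V x) F"
    using assms by (intro mu_balayage[symmetric])
  finally show ?thesis .
qed

definition ball_ratio :: real where
  "ball_ratio = (\<alpha> * lam\<^sup>2 / C\<^sup>2) powr (1 / \<gamma>)"

lemma ball_ratio_powr: "ball_ratio powr \<gamma> = \<alpha> * lam\<^sup>2 / C\<^sup>2"
  using alpha lam C_pos gamma_pos by (simp add: ball_ratio_def powr_powr)

lemma ball_ratio_bounds: "0 < ball_ratio" "ball_ratio < 1"
proof -
  have "0 < \<alpha> * lam\<^sup>2 / C\<^sup>2" "\<alpha> * lam\<^sup>2 / C\<^sup>2 < 1"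
    using alpha lam C_ge1
    by (auto, smt (verit, best) divide_less_eq_1_pos nonzero_divide_eq_eq power_mono zero_less_power)
  then show "0 < ball_ratio" "ball_ratio < 1"
    using gamma_pos by (auto simp: ball_ratio_def powr01_less_one)
qed

lemma harmonic_measure_ball_comparison:
  assumes x: "x \<in> X0" and r: "0 < r" and rR: "ereal r < R0t \<rho> X0 x"
    and y: "y \<in> Ut \<rho> x (ball_ratio\<^sup>2 * r)" and F: "F \<in> sets borel" "F \<subseteq> - Ut \<rho> x r"
  shows "emeasure (\<mu> (Ut \<rho> x (ball_ratio * r)) x) F \<le> ennreal cJ * emeasure (\<mu> (Ut \<rho> x r) y) F"
proof -
  obtain r' where r': "r < r'" "closure (Ut \<rho> x r') \<subseteq> X0" using less_R0tD[OF rR] .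
  have ball_X0: "Ut \<rho> x r \<subseteq> X0" using Ut_mono[of r r'] r' closure_subset by fastforce
  define s where "s = r powr \<gamma> / C"
  have s: "0 < s" using r C_pos by (simp add: s_def)
  have "closure (Vset G x (r' powr \<gamma> / C)) \<subseteq> X0"
    using closure_mono[OF Vset_subset_Ut[of r']] r r' by force
  moreover have "s < r' powr \<gamma> / C"
    using r r' C_pos gamma_pos by (simp add: s_def powr_less_mono2 divide_strict_right_mono)
  ultimately have sS0: "ereal s < S0 G X0 x" using s by (intro less_S0I) auto
  have ball_in_Vset: "Ut \<rho> x (ball_ratio ^ k * r) \<subseteq> Vset G x (\<alpha> ^ k * s)" if "k \<in> {1, 2}" for k
  proof -
    have rk: "0 < ball_ratio ^ k * r" "ball_ratio ^ k * r \<le> r"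
      using ball_ratio_bounds r by (simp_all add: mult_left_le_one_le power_le_one)
    have "(ball_ratio ^ k * r) powr \<gamma> = (ball_ratio powr \<gamma>) ^ k * r powr \<gamma>"
      using ball_ratio_bounds r
      by (simp add: powr_mult powr_realpow[symmetric] powr_powr powr_power mult.commute)
    then have scaled: "(ball_ratio ^ k * r) powr \<gamma> = (\<alpha> * lam\<^sup>2 / C\<^sup>2) ^ k * r powr \<gamma>"
      by (simp only: ball_ratio_powr)
    have bound: "C * ((\<alpha> * lam\<^sup>2 / C\<^sup>2) ^ k * P) / lam\<^sup>2 \<le> \<alpha> ^ k * (P / C)" if "0 < P" for P
      using \<open>k \<in> {1, 2}\<close> that alpha lam C_ge1
      by (auto simp: field_simps power2_eq_square) (simp add: mult_mono')
    have radius: "C * (ball_ratio ^ k * r) powr \<gamma> / lam\<^sup>2 \<le> \<alpha> ^ k * s"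
      unfolding scaled s_def by (rule bound) (use r in simp)
    have w_ball: "lam \<le> w z" if "z \<in> Ut \<rho> x (ball_ratio ^ k * r)" for z
      using lam_le_w[OF subsetD[OF ball_X0 subsetD[OF Ut_mono[OF rk(2)] that]]] .
    have "Ut \<rho> x (ball_ratio ^ k * r) \<subseteq> Vset G x (C * (ball_ratio ^ k * r) powr \<gamma> / lam\<^sup>2)"
      by (rule Ut_subset_Vset[OF rk(1) lam(1) w_ball])
    also have "\<dots> \<subseteq> Vset G x (\<alpha> ^ k * s)"
      by (rule Vset_mono[OF radius])
    finally show ?thesis .
  qed
  let ?V = "\<lambda>t. interior (Vset G x t)"
  have V_ball: "?V s \<subseteq> Ut \<rho> x r" using Vset_subset_Ut[OF r] interior_subset by (auto simp: s_def)
  have ball_V1: "Ut \<rho> x (ball_ratio * r) \<subseteq> ?V (\<alpha> * s)"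
    using ball_in_Vset[of 1] by (intro interior_maximal open_Ut) simp
  have y_V2: "y \<in> ?V (\<alpha>\<^sup>2 * s)"
    using ball_in_Vset[of 2] y interior_maximal[OF _ open_Ut] by blast
  have V1_V: "?V (\<alpha> * s) \<subseteq> ?V s"
    using alpha s by (intro interior_mono Vset_mono) simp
  have "emeasure (\<mu> (Ut \<rho> x (ball_ratio * r)) x) F \<le> emeasure (\<mu> (?V (\<alpha> * s)) x) F"
    by (rule mu_mono_outside[OF open_Ut open_interior ball_V1 F(1)])
      (use F(2) V1_V V_ball in blast)
  also have "\<dots> \<le> ennreal cJ * emeasure (\<mu> (?V s) y) F"
    by (rule HJ[OF x s sS0 y_V2 F(1)]) (use F(2) V_ball in blast)
  also have "\<dots> \<le> ennreal cJ * emeasure (\<mu> (Ut \<rho> x r) y) F"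
    by (rule mult_left_mono[OF mu_mono_outside[OF open_interior open_Ut V_ball F]]) simp
  finally show ?thesis .
qed

theorem weighted_harmonic_measure_ball_comparison:
  assumes x: "x \<in> X0" and r: "0 < r" and rR: "ereal r < ereal ball_ratio * R0t \<rho> X0 x"
    and y: "y \<in> Ut \<rho> x (ball_ratio\<^sup>2 * r)" and E: "E \<in> sets borel" "E \<subseteq> - Ut \<rho> x r"
  shows "emeasure (wmeas \<mu> w (Ut \<rho> x (ball_ratio * r)) x) E
           \<le> ennreal (cJ / lam) * emeasure (wmeas \<mu> w (Ut \<rho> x r) y) E"
proof -
  have "ereal r < R0t \<rho> X0 x"
    using ball_ratio_bounds r rR
    by (cases "R0t \<rho> X0 x") (auto, smt (verit) mult_left_le_one_le zero_less_mult_iff)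
  then have harnack: "emeasure (\<mu> (Ut \<rho> x (ball_ratio * r)) x) F
                        \<le> ennreal cJ * emeasure (\<mu> (Ut \<rho> x r) y) F"
    if "F \<in> sets borel" "F \<subseteq> E" for F
    using that E by (intro harmonic_measure_ball_comparison[OF x r _ y]) auto
  have weights: "lam * w y \<le> w x"
    using mult_left_le[of "w y" lam] lam lam_le_w[OF x] w_le1[of y] by linarith
  show ?thesis
    unfolding wmeas_def
    by (rule emeasure_weighted_density_le[OF mu_sets[OF open_Ut] mu_sets[OF open_Ut] E(1)
          harnack w_meas w_pos lam(1) weights]) (use cJ in simp_all)
qed

end

theorem lemma7p6:
  fixes \<mu> :: "'a::metric_space set \<Rightarrow> 'a \<Rightarrow> 'a measure"
    and X0 :: "'a set"
    and G :: "'a \<Rightarrow> 'a \<Rightarrow> ennreal"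
    and w :: "'a \<Rightarrow> real"
    and \<rho>t :: "'a \<Rightarrow> 'a \<Rightarrow> real"
    and ct \<gamma> C :: real
  assumes separable: "\<exists>D::'a set. countable D \<and> closure D = UNIV"
    and X0_open: "open X0" and X0_proper: "X0 \<noteq> UNIV"
    \<comment> \<open>standing assumptions on the family of measures\<close>
    and mu_sets: "\<And>U x. open U \<Longrightarrow> sets (\<mu> U x) = sets borel"
    and mu_finite: "\<And>U x. open U \<Longrightarrow> finite_measure (\<mu> U x)"
    and mu_U: "\<And>U x. open U \<Longrightarrow> emeasure (\<mu> U x) U = 0"
    and mu_le1: "\<And>U x. open U \<Longrightarrow> emeasure (\<mu> U x) UNIV \<le> 1"
    and mu_dirac: "\<And>U x. open U \<Longrightarrow> x \<notin> U \<Longrightarrow> \<mu> U x = return borel x"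
    and mu_univ: "\<And>U E. open U \<Longrightarrow> E \<in> sets borel \<Longrightarrow>
                     univ_measurable (\<lambda>y. emeasure (\<mu> U y) E)"
    and mu_balayage: "\<And>U V x E. open U \<Longrightarrow> open V \<Longrightarrow> V \<subseteq> U \<Longrightarrow> E \<in> sets borel \<Longrightarrow>
         emeasure (\<mu> U x) E = (\<integral>\<^sup>+ y. emeasure (\<mu> U y) E \<partial>completion (\<mu> V x))"
    \<comment> \<open>(G2')\<close>
    and G_meas: "(\<lambda>(x, y). G x y) \<in> borel_measurable borel"
    and G_pos: "\<And>x y. G x y > 0"
    and G_diag: "\<And>x. G x x = \<infinity>"
    and G_lim: "\<And>x. ((\<lambda>y. G y x) \<longlongrightarrow> \<infinity>) (at x)"
    and w_meas: "w \<in> borel_measurable borel"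
    and w_pos: "\<And>x. 0 < w x" and w_le1: "\<And>x. w x \<le> 1"
    and w_super: "\<And>U x. open U \<Longrightarrow> (\<integral>\<^sup>+ y. ennreal (w y) \<partial>\<mu> U x) \<le> ennreal (w x)"
    and ct_gt1: "ct > 1"
    and Gt_quasi: "\<And>x y z. min (Gt G w x z) (Gt G w y z) \<le> ennreal ct * Gt G w x y"
    and lambda_pos: "\<exists>lam>0. \<forall>x\<in>X0. lam \<le> w x"
    and G_bdd: "\<And>x N. open N \<Longrightarrow> x \<in> N \<Longrightarrow>
                   \<exists>B<\<infinity>. \<forall>y\<in>-N. G y x / ennreal (w y) \<le> B"
    \<comment> \<open>(HJ')\<close>
    and HJ: "\<exists>\<alpha> cJ. 0 < \<alpha> \<and> \<alpha> < 1 \<and> cJ \<ge> 1 \<and>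
         (\<forall>x\<in>X0. \<forall>s. 0 < s \<and> ereal s < S0 G X0 x \<longrightarrow>
            (\<forall>y\<in>interior (Vset G x (\<alpha>\<^sup>2 * s)). \<forall>E\<in>sets borel.
               E \<subseteq> - interior (Vset G x s) \<longrightarrow>
               emeasure (\<mu> (interior (Vset G x (\<alpha> * s))) x) E
                 \<le> ennreal cJ * emeasure (\<mu> (interior (Vset G x s)) y) E))"
    \<comment> \<open>the metric tilde rho\<close>
    and rho_eq0: "\<And>x y. \<rho>t x y = 0 \<longleftrightarrow> x = y"
    and rho_sym: "\<And>x y. \<rho>t x y = \<rho>t y x"
    and rho_tri: "\<And>x y z. \<rho>t x z \<le> \<rho>t x y + \<rho>t y z"
    and rho_top: "\<And>S. open S \<longleftrightarrow> (\<forall>x\<in>S. \<exists>r>0. Ut \<rho>t x r \<subseteq> S)"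
    and gamma: "\<gamma> \<ge> 1" and C: "C \<ge> 1"
    and G_comp: "\<And>x y. x \<noteq> y \<Longrightarrow>
         ennreal (\<rho>t x y powr (-\<gamma>) / C) \<le> Gt G w x y \<and>
         Gt G w x y \<le> ennreal (C * \<rho>t x y powr (-\<gamma>))"
  shows "\<exists>\<alpha>t cJt. 0 < \<alpha>t \<and> \<alpha>t < 1 \<and> cJt \<ge> 1 \<and>
         (\<forall>x\<in>X0. \<forall>r. 0 < r \<and> ereal r < ereal \<alpha>t * R0t \<rho>t X0 x \<longrightarrow>
            (\<forall>y\<in>Ut \<rho>t x (\<alpha>t\<^sup>2 * r). \<forall>E\<in>sets borel.
               E \<subseteq> - Ut \<rho>t x r \<longrightarrow>
               emeasure (wmeas \<mu> w (Ut \<rho>t x (\<alpha>t * r)) x) E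
                 \<le> ennreal cJt * emeasure (wmeas \<mu> w (Ut \<rho>t x r) y) E))"
proof -
  from HJ obtain \<alpha> cJ where alpha: "0 < \<alpha>" "\<alpha> < 1" and cJ: "1 \<le> cJ"
    and HJ_at: "\<forall>x\<in>X0. \<forall>s. 0 < s \<and> ereal s < S0 G X0 x \<longrightarrow>
            (\<forall>y\<in>interior (Vset G x (\<alpha>\<^sup>2 * s)). \<forall>E\<in>sets borel.
               E \<subseteq> - interior (Vset G x s) \<longrightarrow>
               emeasure (\<mu> (interior (Vset G x (\<alpha> * s))) x) E
                 \<le> ennreal cJ * emeasure (\<mu> (interior (Vset G x s)) y) E)"
    by blast
  from lambda_pos obtain lam0 where lam0: "0 < lam0" "\<forall>x\<in>X0. lam0 \<le> w x" by blast
  interpret HJ_setting \<rho>t G w C \<gamma> \<mu> X0 \<alpha> cJ "min lam0 1"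
    by (unfold_locales; (fact assms alpha cJ)?)
      (use C gamma G_comp HJ_at lam0 in \<open>auto simp: min.coboundedI1\<close>)
  have "1 \<le> cJ / min lam0 1" using cJ lam0 by (simp add: field_simps min_le_iff_disj)
  then show ?thesis
    using ball_ratio_bounds
    by (intro exI[of _ ball_ratio] exI[of _ "cJ / min lam0 1"] conjI ballI allI impI)
      (auto intro: weighted_harmonic_measure_ball_comparison)
qed

end
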